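(* Let $C$ be a circle with centre $o$ and radius $r>0$, and let $p'$ be a point with $\lambda=|op'|<r$. Consider all triangles $\triangle abc$ with $a,b,c$ on $C$ and $p'\in\triangle abc$, and let $\mathrm{MinMax}$ be the minimum, over all such triangles, of the length of the longest edge. Then (1) if $\tfrac12 r\le\lambda<r$, $\mathrm{MinMax}=2\sqrt{r^2-\lambda^2}$; (2) if $0\le\lambda\le\tfrac12 r$, $\mathrm{MinMax}=\sqrt3\,r$. *)

theory Defs
  imports "HOL-Analysis.Analysis"
begin

definition longest_edge :: "real^2 \<Rightarrow> real^2 \<Rightarrow> real^2 \<Rightarrow> real" where
  "longest_edge a b c = max (dist a b) (max (dist b c) (dist c a))"

definition edge_values :: "real^2 \<Rightarrow> real \<Rightarrow> real^2 \<Rightarrow> real set" where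
  "edge_values ctr r p = {longest_edge a b c | a b c.
      dist a ctr = r \<and> dist b ctr = r \<and> dist c ctr = r \<and>
      a \<noteq> b \<and> b \<noteq> c \<and> c \<noteq> a \<and> p \<in> convex hull {a, b, c}}"

definition is_minimum :: "real \<Rightarrow> real set \<Rightarrow> bool" where
  "is_minimum m S \<longleftrightarrow> m \<in> S \<and> (\<forall>x\<in>S. m \<le> x)"

end

theory Submission
  imports Defs
begin

text \<open>If one of the three central angles of the triangle is at least \<open>2\<pi>/3\<close>, the corresponding
  edge already has length at least \<open>\<surd>3 r\<close>. Otherwise the three vertices lie on an arc short
  enough that the longest edge \<open>ac\<close> separates the triangle from the centre; then every point of
  the triangle, in particular \<open>p'\<close>, is at least as far from \<open>o\<close> as the chord \<open>ac\<close>, so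
  \<open>|ac| \<ge> 2\<surd>(r\<^sup>2 - \<lambda>\<^sup>2)\<close>. Hence the longest edge is at least \<open>min (\<surd>3 r) (2\<surd>(r\<^sup>2 - \<lambda>\<^sup>2))\<close>.
  The bound is attained by the chord through \<open>p'\<close> perpendicular to \<open>op'\<close> (completed by the
  far end of the diameter through \<open>p'\<close>), and, when \<open>\<lambda> \<le> r/2\<close>, by an equilateral triangle,
  whose incircle has radius \<open>r/2\<close>.\<close>

lemma dist_sq_on_sphere:
  fixes a b ctr :: "'a::real_inner"
  assumes "dist a ctr = r" and "dist b ctr = r"
  shows "(dist a b)\<^sup>2 = 2 * r\<^sup>2 - 2 * inner (a - ctr) (b - ctr)"
proof -
  have "a - b = (a - ctr) - (b - ctr)" by simp
  then show ?thesis
    using dot_norm_neg[of "a - ctr" "b - ctr"] assms by (simp add: dist_norm)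
qed

lemma two_sqrt_le:
  fixes s d :: real
  assumes "0 \<le> d" and "4 * s \<le> d\<^sup>2"
  shows "2 * sqrt s \<le> d"
proof -
  have "2 * sqrt s = sqrt (4 * s)" by (simp add: real_sqrt_mult)
  also have "\<dots> \<le> d" using assms by (rule real_le_lsqrt)
  finally show ?thesis .
qed

lemma wide_chord_ge_sqrt3:
  fixes a b ctr :: "'a::real_inner"
  assumes "r \<ge> 0" and "dist a ctr = r" and "dist b ctr = r"
    and "inner (a - ctr) (b - ctr) \<le> - (r\<^sup>2 / 2)"
  shows "sqrt 3 * r \<le> dist a b"
proof -
  have "3 * r\<^sup>2 \<le> (dist a b)\<^sup>2"
    using dist_sq_on_sphere[OF assms(2,3)] assms(4) by simp
  then have "sqrt (3 * r\<^sup>2) \<le> dist a b"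
    by (simp add: real_le_lsqrt)
  then show ?thesis using assms(1) by (simp add: real_sqrt_mult)
qed

lemma chord_length_antimono:
  fixes l l' r :: real
  assumes "0 \<le> l" and "l \<le> l'"
  shows "2 * sqrt (r\<^sup>2 - l'\<^sup>2) \<le> 2 * sqrt (r\<^sup>2 - l\<^sup>2)"
  using assms by (simp add: power_mono)

lemma sqrt3_eq_chord_length_half:
  fixes r :: real
  assumes "0 \<le> r"
  shows "sqrt 3 * r = 2 * sqrt (r\<^sup>2 - (r / 2)\<^sup>2)"
proof -
  have "r\<^sup>2 - (r / 2)\<^sup>2 = (sqrt 3 * r / 2)\<^sup>2"
    by (simp add: power_mult_distrib power_divide)
  then show ?thesis using assms by simp
qed

lemma inner_real2: "inner (x::real^2) y = x$1 * y$1 + x$2 * y$2"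
  by (simp add: inner_vec_def sum_2)

lemma norm_real2_sq: "(norm (x::real^2))\<^sup>2 = (x$1)\<^sup>2 + (x$2)\<^sup>2"
  unfolding power2_norm_eq_inner inner_real2 by (simp add: power2_eq_square)

lemma parseval_orthogonal_real2:
  fixes n m v :: "real^2"
  assumes "inner n m = 0"
  shows "(norm n)\<^sup>2 * (norm m)\<^sup>2 * (norm v)\<^sup>2
           = (inner v n)\<^sup>2 * (norm m)\<^sup>2 + (inner v m)\<^sup>2 * (norm n)\<^sup>2"
  using assms unfolding norm_real2_sq inner_real2 by algebra

lemma exists_orthogonal_real2:
  fixes x :: "real^2"
  obtains y where "norm y = norm x" and "inner x y = 0"
proof
  let ?y = "vector [- x$2, x$1] :: real^2"
  show "norm ?y = norm x"
    by (simp add: norm_eq_sqrt_inner inner_real2 add.commute)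
  show "inner x ?y = 0"
    by (simp add: inner_real2)
qed

lemma equilateral_frame_real2:
  obtains e1 e2 e3 :: "real^2"
  where "norm e1 = 1" "norm e2 = 1" "norm e3 = 1"
    and "inner e1 e2 = - 1 / 2" "inner e2 e3 = - 1 / 2" "inner e3 e1 = - 1 / 2"
    and "e1 + e2 + e3 = 0"
    and "\<And>x. inner x e1 *\<^sub>R e1 + inner x e2 *\<^sub>R e2 + inner x e3 *\<^sub>R e3 = (3 / 2) *\<^sub>R x"
proof
  let ?s = "sqrt 3 / 2"
  have s: "?s * ?s = 3 / 4" by simp
  let ?e1 = "vector [1, 0] :: real^2"
  let ?e2 = "vector [- 1 / 2, ?s] :: real^2"
  let ?e3 = "vector [- 1 / 2, - ?s] :: real^2"
  show "norm ?e1 = 1" "norm ?e2 = 1" "norm ?e3 = 1"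
    using s by (simp_all add: norm_eq_1 inner_real2)
  show "inner ?e1 ?e2 = - 1 / 2" "inner ?e2 ?e3 = - 1 / 2" "inner ?e3 ?e1 = - 1 / 2"
    using s by (simp_all add: inner_real2)
  show "?e1 + ?e2 + ?e3 = 0"
    by (simp add: vec_eq_iff forall_2)
  show "inner x ?e1 *\<^sub>R ?e1 + inner x ?e2 *\<^sub>R ?e2 + inner x ?e3 *\<^sub>R ?e3 = (3 / 2) *\<^sub>R x" for x
    using s by (simp add: vec_eq_iff forall_2 inner_real2 algebra_simps)
qed

text \<open>The chord from \<open>u\<close> to \<open>w\<close> lies on the line \<open>2 * inner (u + w) y = (norm (u + w))\<^sup>2\<close>,
  so the conclusion says that \<open>v\<close> lies beyond that chord, seen from the centre. The proof expands
  \<open>v\<close> in the orthogonal basis \<open>u + w\<close>, \<open>u - w\<close> of the plane; \<open>P\<close> and \<open>Q\<close> are its scaled coordinates.\<close>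
lemma third_point_beyond_chord:
  fixes u v w :: "real^2"
  assumes u: "norm u = r" and v: "norm v = r" and w: "norm w = r"
    and least_uv: "inner u w \<le> inner u v" and least_vw: "inner u w \<le> inner v w"
    and narrow: "- (r\<^sup>2 / 2) < inner u w"
  shows "(norm (u + w))\<^sup>2 \<le> 2 * inner (u + w) v"
proof -
  define N M P Q where "N = (norm (u + w))\<^sup>2" and "M = (norm (u - w))\<^sup>2"
    and "P = inner v (u + w)" and "Q = inner v (u - w)"
  have "inner (u + w) (u - w) = 0"
    using u w by (simp add: algebra_simps inner_commute power2_norm_eq_inner[symmetric])
  then have parseval: "N * M * r\<^sup>2 = P\<^sup>2 * M + Q\<^sup>2 * N"
    using parseval_orthogonal_real2[of "u + w" "u - w" v] v unfolding N_def M_def P_def Q_def by simp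
  have NM: "N + M = 4 * r\<^sup>2" "N - M = 4 * inner u w"
    using dot_norm[of u w] dot_norm_neg[of u w] u w unfolding N_def M_def by auto
  have "2 * inner u v = P + Q" "2 * inner v w = P - Q"
    unfolding P_def Q_def by (auto simp: algebra_simps inner_commute)
  then have Q_bound: "2 * \<bar>Q\<bar> \<le> 2 * P - (N - M)"
    using least_uv least_vw NM(2) by linarith
  have M_lt: "M < 3 * N" using NM narrow by linarith
  have "M \<ge> 0" unfolding M_def by simp
  show ?thesis
  proof (cases "M = 0")
    case True
    then show ?thesis using Q_bound unfolding N_def P_def by (simp add: inner_commute)
  next
    case False
    then have "M > 0" using \<open>M \<ge> 0\<close> by simp
    have "(2 * Q)\<^sup>2 \<le> (2 * P - (N - M))\<^sup>2"
    proof (rule power2_le_iff_abs_le[THEN iffD2])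
      show "\<bar>2 * Q\<bar> \<le> 2 * P - (N - M)" "0 \<le> 2 * P - (N - M)"
        using Q_bound by (simp_all add: abs_mult)
    qed
    then have "N * (2 * Q)\<^sup>2 \<le> N * (2 * P - (N - M))\<^sup>2"
      by (rule mult_left_mono) (simp add: N_def)
    have "N * M * (N + M) = 4 * (N * M * r\<^sup>2)"
      using NM(1) by simp
    also have "\<dots> \<le> 4 * P\<^sup>2 * M + N * (2 * P - (N - M))\<^sup>2"
      using parseval \<open>N * (2 * Q)\<^sup>2 \<le> _\<close> by (simp add: power_mult_distrib mult.commute)
    \<comment> \<open>of the two roots \<open>N / 2\<close> and \<open>N * (N - 3 * M) / (2 * (N + M))\<close> in \<open>P\<close>, the bound on \<open>Q\<close> excludes the smaller\<close>
    also have "\<dots> = N * M * (N + M) + (2 * P - N) * (2 * P * (N + M) - N * (N - 3 * M))"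
      by (simp add: power2_eq_square algebra_simps)
    finally have prod_nonneg: "0 \<le> (2 * P - N) * (2 * P * (N + M) - N * (N - 3 * M))"
      by simp
    have "(N - M) * (N + M) \<le> 2 * P * (N + M)"
      by (rule mult_right_mono) (use Q_bound NM(1) in auto)
    moreover have "(N - M) * (N + M) - N * (N - 3 * M) = M * (3 * N - M)"
      by (simp add: algebra_simps)
    moreover have "0 < M * (3 * N - M)"
      using \<open>M > 0\<close> M_lt by simp
    ultimately have "0 < 2 * P * (N + M) - N * (N - 3 * M)"
      by linarith
    with prod_nonneg have "N \<le> 2 * P"
      by (simp add: zero_le_mult_iff)
    then show ?thesis unfolding N_def P_def by (simp add: inner_commute)
  qed
qed

lemma chord_ge_through_hull_point:
  fixes a b c ctr p :: "real^2"
  assumes da: "dist a ctr = r" and db: "dist b ctr = r" and dc: "dist c ctr = r"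
    and hull: "p \<in> convex hull {a, b, c}"
    and least_ab: "inner (a - ctr) (c - ctr) \<le> inner (a - ctr) (b - ctr)"
    and least_bc: "inner (a - ctr) (c - ctr) \<le> inner (b - ctr) (c - ctr)"
    and narrow: "- (r\<^sup>2 / 2) < inner (a - ctr) (c - ctr)"
  shows "2 * sqrt (r\<^sup>2 - (dist ctr p)\<^sup>2) \<le> dist a c"
proof -
  define u v w where "u = a - ctr" and "v = b - ctr" and "w = c - ctr"
  define n where "n = u + w"
  have norms: "norm u = r" "norm v = r" "norm w = r"
    using da db dc by (simp_all add: u_def v_def w_def dist_norm)
  have n_sq: "(norm n)\<^sup>2 = 2 * r\<^sup>2 + 2 * inner u w"
    using dot_norm[of u w] norms unfolding n_def by simp
  define H where "H = {y. inner n ctr + (norm n)\<^sup>2 / 2 \<le> inner n y}"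
  have mem_H: "y \<in> H \<longleftrightarrow> (norm n)\<^sup>2 \<le> 2 * inner n (y - ctr)" for y
    unfolding H_def by (auto simp: inner_diff_right field_simps)
  have "2 * inner n u = (norm n)\<^sup>2" "2 * inner n w = (norm n)\<^sup>2"
    using n_sq norms unfolding n_def
    by (simp_all add: inner_add_left inner_add_right inner_commute[of w u]
        flip: power2_norm_eq_inner)
  moreover have "(norm n)\<^sup>2 \<le> 2 * inner n v"
    using third_point_beyond_chord[OF norms] least_ab least_bc narrow
    unfolding n_def u_def v_def w_def by (simp add: inner_commute)
  ultimately have "a \<in> H" "b \<in> H" "c \<in> H"
    unfolding mem_H u_def v_def w_def by simp_all
  moreover have "convex H"
    unfolding H_def by (rule convex_halfspace_ge)
  ultimately have "convex hull {a, b, c} \<subseteq> H"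
    by (intro hull_minimal) auto
  then have "(norm n)\<^sup>2 \<le> 2 * inner n (p - ctr)"
    using hull mem_H by blast
  also have "\<dots> \<le> 2 * (norm n * dist ctr p)"
    using norm_cauchy_schwarz[of n "p - ctr"] by (simp add: dist_norm norm_minus_commute)
  finally have "norm n \<le> 2 * dist ctr p"
    by (cases "norm n = 0") (auto simp: power2_eq_square)
  then have "(norm n)\<^sup>2 \<le> (2 * dist ctr p)\<^sup>2"
    by (rule power_mono) simp
  moreover have "(dist a c)\<^sup>2 = 4 * r\<^sup>2 - (norm n)\<^sup>2"
    using dist_sq_on_sphere[OF da dc] n_sq by (simp add: u_def w_def)
  ultimately show ?thesis
    by (intro two_sqrt_le) (auto simp: power_mult_distrib)
qed

lemma edge_ge_min_if_least_inner:
  fixes a b c ctr p :: "real^2"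
  assumes "r \<ge> 0" and "dist a ctr = r" and "dist b ctr = r" and "dist c ctr = r"
    and "p \<in> convex hull {a, b, c}"
    and "inner (a - ctr) (c - ctr) \<le> inner (a - ctr) (b - ctr)"
    and "inner (a - ctr) (c - ctr) \<le> inner (b - ctr) (c - ctr)"
  shows "min (sqrt 3 * r) (2 * sqrt (r\<^sup>2 - (dist ctr p)\<^sup>2)) \<le> dist a c"
proof (cases "inner (a - ctr) (c - ctr) \<le> - (r\<^sup>2 / 2)")
  case True
  then show ?thesis using wide_chord_ge_sqrt3[of r a ctr c] assms by simp
next
  case False
  then show ?thesis using chord_ge_through_hull_point[of a ctr r b c p] assms by simp
qed

lemma longest_edge_ge_min:
  fixes a b c ctr p :: "real^2"
  assumes "r \<ge> 0" and "dist a ctr = r" and "dist b ctr = r" and "dist c ctr = r"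
    and "p \<in> convex hull {a, b, c}"
  shows "min (sqrt 3 * r) (2 * sqrt (r\<^sup>2 - (dist ctr p)\<^sup>2)) \<le> longest_edge a b c"
proof -
  let ?m = "min (sqrt 3 * r) (2 * sqrt (r\<^sup>2 - (dist ctr p)\<^sup>2))"
  have hull: "p \<in> convex hull {a, c, b}" "p \<in> convex hull {b, a, c}"
    using assms(5) by (simp_all add: insert_commute)
  have edges: "dist a b \<le> longest_edge a b c" "dist b c \<le> longest_edge a b c"
    "dist a c \<le> longest_edge a b c"
    unfolding longest_edge_def by (auto simp: dist_commute)
  consider "inner (a - ctr) (c - ctr) \<le> inner (a - ctr) (b - ctr)"
      "inner (a - ctr) (c - ctr) \<le> inner (b - ctr) (c - ctr)"
    | "inner (a - ctr) (b - ctr) \<le> inner (a - ctr) (c - ctr)"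
      "inner (a - ctr) (b - ctr) \<le> inner (c - ctr) (b - ctr)"
    | "inner (b - ctr) (c - ctr) \<le> inner (b - ctr) (a - ctr)"
      "inner (b - ctr) (c - ctr) \<le> inner (a - ctr) (c - ctr)"
    by (smt (verit) inner_commute)
  then show ?thesis
  proof cases
    case 1
    then have "?m \<le> dist a c" using edge_ge_min_if_least_inner assms by blast
    with edges show ?thesis by linarith
  next
    case 2
    then have "?m \<le> dist a b" using edge_ge_min_if_least_inner hull(1) assms by blast
    with edges show ?thesis by linarith
  next
    case 3
    then have "?m \<le> dist b c" using edge_ge_min_if_least_inner hull(2) assms by blast
    with edges show ?thesis by linarith
  qed
qed

lemma edge_valuesI:
  assumes "dist a ctr = r" "dist b ctr = r" "dist c ctr = r" "a \<noteq> b" "b \<noteq> c" "c \<noteq> a"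
    and "p \<in> convex hull {a, b, c}"
  shows "longest_edge a b c \<in> edge_values ctr r p"
  unfolding edge_values_def using assms by blast

lemma sqrt3_in_edge_values:
  fixes ctr p :: "real^2"
  assumes r: "r > 0" and near: "dist ctr p \<le> r / 2"
  shows "sqrt 3 * r \<in> edge_values ctr r p"
proof -
  obtain e1 e2 e3 :: "real^2"
    where unit: "norm e1 = 1" "norm e2 = 1" "norm e3 = 1"
      and angle: "inner e1 e2 = - 1 / 2" "inner e2 e3 = - 1 / 2" "inner e3 e1 = - 1 / 2"
      and sum: "e1 + e2 + e3 = 0"
      and frame: "\<And>x. inner x e1 *\<^sub>R e1 + inner x e2 *\<^sub>R e2 + inner x e3 *\<^sub>R e3 = (3 / 2) *\<^sub>R x"
    using equilateral_frame_real2 by blast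
  define x where "x = p - ctr"
  define vert where "vert e = ctr + r *\<^sub>R e" for e :: "real^2"
  \<comment> \<open>barycentric coordinates of \<open>p\<close>; \<open>norm x \<le> r / 2\<close> makes them nonnegative\<close>
  define wt where "wt e = 1 / 3 + 2 / (3 * r) * inner x e" for e :: "real^2"
  have on_circle: "dist (vert e) ctr = r" if "norm e = 1" for e
    using that r by (simp add: vert_def dist_norm)
  have side: "dist (vert e) (vert e') = sqrt 3 * r" if "norm e = 1" "norm e' = 1" "inner e e' = - 1 / 2"
    for e e'
  proof -
    have "(dist (vert e) (vert e'))\<^sup>2 = 3 * r\<^sup>2"
      using dist_sq_on_sphere[OF on_circle on_circle] that by (simp add: vert_def power2_eq_square)
    then have "sqrt (3 * r\<^sup>2) = dist (vert e) (vert e')"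
      by (rule real_sqrt_unique) simp
    then show ?thesis
      using r by (simp add: real_sqrt_mult)
  qed
  have sides: "dist (vert e1) (vert e2) = sqrt 3 * r" "dist (vert e2) (vert e3) = sqrt 3 * r"
    "dist (vert e3) (vert e1) = sqrt 3 * r"
    using side unit angle by simp_all
  have wt_nonneg: "0 \<le> wt e" if "norm e = 1" for e
  proof -
    have "- inner x e \<le> norm x"
      using norm_cauchy_schwarz[of "- x" e] that by simp
    then have "- (r / 2) \<le> inner x e"
      using near by (simp add: x_def dist_norm norm_minus_commute)
    then show ?thesis
      using r by (simp add: wt_def field_simps)
  qed
  have "wt e1 + wt e2 + wt e3 = 1 + 2 / (3 * r) * inner x (e1 + e2 + e3)"
    by (simp add: wt_def inner_add_right add_divide_distrib algebra_simps)
  then have wt_sum: "wt e1 + wt e2 + wt e3 = 1"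
    using sum by simp
  have wt_vert: "wt e *\<^sub>R vert e = wt e *\<^sub>R ctr + (r / 3) *\<^sub>R e + (2 / 3 * inner x e) *\<^sub>R e" for e
    using r by (simp add: wt_def vert_def algebra_simps)
  have "wt e1 *\<^sub>R vert e1 + wt e2 *\<^sub>R vert e2 + wt e3 *\<^sub>R vert e3
      = (wt e1 + wt e2 + wt e3) *\<^sub>R ctr + (r / 3) *\<^sub>R (e1 + e2 + e3)
        + (2 / 3) *\<^sub>R (inner x e1 *\<^sub>R e1 + inner x e2 *\<^sub>R e2 + inner x e3 *\<^sub>R e3)"
    unfolding wt_vert by (simp add: algebra_simps)
  also have "\<dots> = p"
    unfolding wt_sum sum frame by (simp add: x_def)
  finally have "p \<in> convex hull {vert e1, vert e2, vert e3}"
    unfolding convex_hull_3 using wt_nonneg unit wt_sum by blast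
  moreover have "longest_edge (vert e1) (vert e2) (vert e3) = sqrt 3 * r"
    using sides by (simp add: longest_edge_def)
  moreover have "vert e1 \<noteq> vert e2" "vert e2 \<noteq> vert e3" "vert e3 \<noteq> vert e1"
    using sides r by auto
  ultimately show ?thesis
    using edge_valuesI[OF on_circle on_circle on_circle] unit by metis
qed

lemma chord_in_edge_values:
  fixes ctr p :: "real^2"
  assumes pos: "0 < dist ctr p" and inside: "dist ctr p < r"
  shows "2 * sqrt (r\<^sup>2 - (dist ctr p)\<^sup>2) \<in> edge_values ctr r p"
proof -
  define x where "x = p - ctr"
  define l where "l = dist ctr p"
  define h where "h = sqrt (r\<^sup>2 - l\<^sup>2)"
  have l: "norm x = l" "0 < l" "l < r"
    using pos inside by (simp_all add: x_def l_def dist_norm norm_minus_commute)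
  have h: "0 < h" "h\<^sup>2 = r\<^sup>2 - l\<^sup>2"
    using l by (simp_all add: h_def power_strict_mono)
  obtain y where y: "norm y = l" "inner x y = 0"
    using exists_orthogonal_real2 l(1) by metis
  define e where "e = (h / l) *\<^sub>R y"
  have e: "norm e = h" "inner x e = 0"
    using y l h by (simp_all add: e_def)
  define a b c where "a = p + e" and "b = p - e" and "c = ctr + (r / l) *\<^sub>R x"
  have "(norm (x + e))\<^sup>2 = r\<^sup>2" "(norm (x + - e))\<^sup>2 = r\<^sup>2"
    using norm_add_Pythagorean[of x e] norm_add_Pythagorean[of x "- e"] e l h
    by (simp_all add: orthogonal_def)
  moreover have rel: "a - ctr = x + e" "b - ctr = x + - e" "c - ctr = (r / l) *\<^sub>R x"
    by (simp_all add: a_def b_def c_def x_def)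
  ultimately have on_circle: "dist a ctr = r" "dist b ctr = r" "dist c ctr = r"
    using l inside by (simp_all add: dist_norm power2_eq_iff_nonneg)
  have "a - b = 2 *\<^sub>R e"
    by (simp add: a_def b_def scaleR_2)
  then have "dist a b = 2 * h"
    unfolding dist_norm using e h by simp
  have "inner x x = l\<^sup>2" "inner e x = 0"
    using l e by (simp_all add: inner_commute flip: power2_norm_eq_inner)
  then have "inner (b - ctr) (c - ctr) = r * l" "inner (c - ctr) (a - ctr) = r * l"
    unfolding rel using l e(2)
    by (simp_all add: inner_diff_left inner_add_right power2_eq_square)
  then have "(dist b c)\<^sup>2 = 2 * r\<^sup>2 - 2 * r * l" "(dist c a)\<^sup>2 = 2 * r\<^sup>2 - 2 * r * l"
    using dist_sq_on_sphere[OF on_circle(2,3)] dist_sq_on_sphere[OF on_circle(3,1)] by simp_all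
  moreover have "2 * r\<^sup>2 - 2 * r * l \<le> (2 * h)\<^sup>2"
  proof -
    have "0 \<le> 2 * (r - l) * (r + 2 * l)" using l by simp
    then show ?thesis using h(2) by (simp add: power2_eq_square algebra_simps)
  qed
  ultimately have "dist b c \<le> 2 * h" "dist c a \<le> 2 * h"
    using h(1) by (auto intro: power2_le_imp_le)
  then have "longest_edge a b c = 2 * h"
    using \<open>dist a b = 2 * h\<close> by (simp add: longest_edge_def)
  moreover have "a \<noteq> b" "b \<noteq> c" "c \<noteq> a"
    using \<open>dist a b = 2 * h\<close> \<open>(dist b c)\<^sup>2 = _\<close> \<open>(dist c a)\<^sup>2 = _\<close> h l
    by (auto simp: power2_eq_square)
  moreover have "p = (1 / 2) *\<^sub>R a + (1 / 2) *\<^sub>R b + 0 *\<^sub>R c"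
    by (simp add: a_def b_def algebra_simps flip: scaleR_2)
  then have "p \<in> convex hull {a, b, c}"
    unfolding convex_hull_3 by (intro CollectI exI[of _ "1 / 2"] exI[of _ 0]) simp
  ultimately show ?thesis
    using edge_valuesI[OF on_circle] by (simp add: h_def l_def)
qed

theorem mainTheorem15:
  fixes ctr p :: "real^2" and r :: real
  assumes "r > 0" and "dist ctr p < r"
  shows "(r / 2 \<le> dist ctr p \<longrightarrow>
            is_minimum (2 * sqrt (r^2 - (dist ctr p)^2)) (edge_values ctr r p))
       \<and> (dist ctr p \<le> r / 2 \<longrightarrow>
            is_minimum (sqrt 3 * r) (edge_values ctr r p))"
proof -
  let ?chord = "2 * sqrt (r\<^sup>2 - (dist ctr p)\<^sup>2)"
  have lower: "min (sqrt 3 * r) ?chord \<le> x" if "x \<in> edge_values ctr r p" for x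
    using that longest_edge_ge_min[of r] assms(1) unfolding edge_values_def by auto
  have half: "sqrt 3 * r = 2 * sqrt (r\<^sup>2 - (r / 2)\<^sup>2)"
    using assms(1) by (simp add: sqrt3_eq_chord_length_half)
  show ?thesis
  proof (intro conjI impI)
    assume far: "r / 2 \<le> dist ctr p"
    then have "?chord \<le> sqrt 3 * r"
      unfolding half using assms(1) by (intro chord_length_antimono) auto
    moreover have "?chord \<in> edge_values ctr r p"
      using far assms by (intro chord_in_edge_values) auto
    ultimately show "is_minimum ?chord (edge_values ctr r p)"
      unfolding is_minimum_def using lower by (metis min.absorb2)
  next
    assume near: "dist ctr p \<le> r / 2"
    then have "sqrt 3 * r \<le> ?chord"
      unfolding half by (intro chord_length_antimono) auto
    moreover have "sqrt 3 * r \<in> edge_values ctr r p"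
      using assms(1) near by (rule sqrt3_in_edge_values)
    ultimately show "is_minimum (sqrt 3 * r) (edge_values ctr r p)"
      unfolding is_minimum_def using lower by (metis min.absorb1)
  qed
qed

end
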